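(* Let $C=\{x\in\ell_2:\|x\|_1\le1\}$, considered as a subset of $\ell_2$ with the $\ell_2$-norm topology, where $\|x\|_1=\sum_i|x_i|$. Then $\operatorname{icr} C=\operatorname{fri} C=\{x\in\ell_2:\|x\|_1<1\}$.
   Context: For a convex set $C$, a convex subset $F\subseteq C$ is a face of $C$ if for every $x\in F$ and all $y,z\in C$ with $x\in(y,z)=\{(1-t)y+tz:t\in(0,1)\}$ we have $y,z\in F$; $F_{\min}(x,C)$ is the intersection of all faces of $C$ containing $x\in C$. $\operatorname{icr} C=\{x\in C:\forall y\in C\ \exists z\in C,\ x\in(y,z)\}$; $\operatorname{fri} C=\{x\in C: C\subseteq\overline{F_{\min}(x,C)}\}$. *)

theory Defs
  imports "HOL-Analysis.Analysis"
begin

type_synonym seq = "nat \<Rightarrow> real"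

text \<open>The open segment (y,z) = {(1-t)y + tz : t in (0,1)} (as in the paper; equals {y} if y = z).\<close>
definition oseg :: "seq \<Rightarrow> seq \<Rightarrow> seq set" where
  "oseg y z = {(\<lambda>i. (1 - t) * y i + t * z i) | t. 0 < t \<and> t < 1}"

definition seq_convex :: "seq set \<Rightarrow> bool" where
  "seq_convex S \<longleftrightarrow> (\<forall>y\<in>S. \<forall>z\<in>S. \<forall>t::real. 0 \<le> t \<and> t \<le> 1 \<longrightarrow> (\<lambda>i. (1 - t) * y i + t * z i) \<in> S)"

definition is_face :: "seq set \<Rightarrow> seq set \<Rightarrow> bool" where
  "is_face F C \<longleftrightarrow> seq_convex F \<and> F \<subseteq> C \<and>
     (\<forall>x\<in>F. \<forall>y\<in>C. \<forall>z\<in>C. x \<in> oseg y z \<longrightarrow> y \<in> F \<and> z \<in> F)"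

definition Fmin :: "seq \<Rightarrow> seq set \<Rightarrow> seq set" where
  "Fmin x C = \<Inter>{F. is_face F C \<and> x \<in> F}"

definition icr :: "seq set \<Rightarrow> seq set" where
  "icr C = {x \<in> C. \<forall>y\<in>C. \<exists>z\<in>C. x \<in> oseg y z}"

definition l2 :: "seq set" where
  "l2 = {x. summable (\<lambda>i. (x i)\<^sup>2)}"

definition l2norm :: "seq \<Rightarrow> real" where
  "l2norm x = sqrt (\<Sum>i. (x i)\<^sup>2)"

definition l2closure :: "seq set \<Rightarrow> seq set" where
  "l2closure S = {x \<in> l2. \<forall>e>0. \<exists>y\<in>S. l2norm (\<lambda>i. x i - y i) < e}"

definition fri :: "seq set \<Rightarrow> seq set" where
  "fri C = {x \<in> C. C \<subseteq> l2closure (Fmin x C)}"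

definition l1_le1 :: "seq set" where
  "l1_le1 = {x \<in> l2. summable (\<lambda>i. \<bar>x i\<bar>) \<and> (\<Sum>i. \<bar>x i\<bar>) \<le> 1}"

definition l1_lt1 :: "seq set" where
  "l1_lt1 = {x \<in> l2. summable (\<lambda>i. \<bar>x i\<bar>) \<and> (\<Sum>i. \<bar>x i\<bar>) < 1}"

end

theory Submission
  imports Defs
begin

text \<open>
  If \<open>\<parallel>x\<parallel>\<^sub>1 < 1\<close>, every segment of \<open>C\<close> ending at a point \<open>y\<close> can be prolonged
  beyond \<open>x\<close> while staying in \<open>C\<close>, so \<open>x \<in> icr C\<close>; conversely an icr point is a proper
  multiple of a point of \<open>C\<close> (take \<open>y = 0\<close>). An icr point lies in no proper face, so
  \<open>F\<^sub>m\<^sub>i\<^sub>n(x, C) = C\<close> and \<open>icr C \<subseteq> fri C\<close>. If \<open>\<parallel>x\<parallel>\<^sub>1 = 1\<close>, the set of points of \<open>C\<close> on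
  which the functional \<open>y \<mapsto> \<Sum> sgn(x\<^sub>i) y\<^sub>i\<close> attains its maximum \<open>1\<close> is a face containing
  \<open>x\<close>; all its points have \<open>sgn(x\<^sub>j) y\<^sub>j \<ge> 0\<close>, so for \<open>x\<^sub>j \<noteq> 0\<close> the point
  \<open>-sgn(x\<^sub>j) e\<^sub>j \<in> C\<close> has \<open>\<ell>\<^sub>2\<close>-distance at least \<open>1\<close> from it, and \<open>x \<notin> fri C\<close>.
\<close>

lemma icr_subset_Fmin:
  assumes "x \<in> icr C"
  shows "C \<subseteq> Fmin x C"
  unfolding Fmin_def
proof (intro subsetI InterI)
  fix w F assume w: "w \<in> C" and "F \<in> {F. is_face F C \<and> x \<in> F}"
  then have face: "is_face F C" and "x \<in> F" by auto
  from assms w obtain z where "z \<in> C" "x \<in> oseg w z" by (auto simp: icr_def)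
  with face \<open>x \<in> F\<close> w show "w \<in> F"
    unfolding is_face_def by blast
qed

lemma subset_l2closure:
  assumes "S \<subseteq> l2" "S \<subseteq> T"
  shows "S \<subseteq> l2closure T"
  using assms by (auto simp: l2closure_def l2norm_def intro!: bexI)

lemma icr_subset_fri:
  assumes "C \<subseteq> l2"
  shows "icr C \<subseteq> fri C"
  using assms icr_subset_Fmin subset_l2closure by (fastforce simp: fri_def icr_def)

lemma is_face_level_set:
  assumes convex: "seq_convex C"
    and le_one: "\<And>y. y \<in> C \<Longrightarrow> f y \<le> 1"
    and affine: "\<And>y z t. y \<in> C \<Longrightarrow> z \<in> C \<Longrightarrow>
                   f (\<lambda>i. (1 - t) * y i + t * z i) = (1 - t) * f y + t * f z"
  shows "is_face {y \<in> C. f y = 1} C"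
  unfolding is_face_def
proof (intro conjI ballI impI)
  show "seq_convex {y \<in> C. f y = 1}"
    using convex unfolding seq_convex_def by (simp add: affine)
  show "{y \<in> C. f y = 1} \<subseteq> C" by blast
  fix x y z assume "x \<in> {y \<in> C. f y = 1}" and y: "y \<in> C" and z: "z \<in> C" and "x \<in> oseg y z"
  then obtain t where t: "0 < t" "t < 1" and "(1 - t) * f y + t * f z = 1"
    unfolding oseg_def using affine by force
  then have "(1 - t) * (1 - f y) + t * (1 - f z) = 0"
    by (simp add: algebra_simps)
  moreover have "0 \<le> (1 - t) * (1 - f y)" "0 \<le> t * (1 - f z)"
    using t le_one[OF y] le_one[OF z] by simp_all
  ultimately have "(1 - t) * (1 - f y) = 0" "t * (1 - f z) = 0"
    by linarith+
  then have "f y = 1" "f z = 1"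
    using t by simp_all
  with y z show "y \<in> {y \<in> C. f y = 1}" "z \<in> {y \<in> C. f y = 1}"
    by simp_all
qed

lemma summable_square_if_summable_abs:
  fixes x :: seq
  assumes "summable (\<lambda>i. \<bar>x i\<bar>)"
  shows "summable (\<lambda>i. (x i)\<^sup>2)"
proof (rule summable_comparison_test'[of "\<lambda>i. (\<Sum>k. \<bar>x k\<bar>) * \<bar>x i\<bar>" 0])
  show "summable (\<lambda>i. (\<Sum>k. \<bar>x k\<bar>) * \<bar>x i\<bar>)"
    using assms by (rule summable_mult)
  fix i
  have "\<bar>x i\<bar> \<le> (\<Sum>k. \<bar>x k\<bar>)"
    using sum_le_suminf[OF assms, of "{i}"] by simp
  then have "\<bar>x i\<bar> * \<bar>x i\<bar> \<le> (\<Sum>k. \<bar>x k\<bar>) * \<bar>x i\<bar>"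
    by (rule mult_right_mono) simp
  then show "norm ((x i)\<^sup>2) \<le> (\<Sum>k. \<bar>x k\<bar>) * \<bar>x i\<bar>"
    by (simp add: power2_eq_square abs_mult)
qed

lemma summable_abs_lincomb:
  fixes y z :: seq
  assumes y: "summable (\<lambda>i. \<bar>y i\<bar>)" and z: "summable (\<lambda>i. \<bar>z i\<bar>)"
  shows "summable (\<lambda>i. \<bar>a * y i + b * z i\<bar>)"
    and "(\<Sum>i. \<bar>a * y i + b * z i\<bar>) \<le> \<bar>a\<bar> * (\<Sum>i. \<bar>y i\<bar>) + \<bar>b\<bar> * (\<Sum>i. \<bar>z i\<bar>)"
proof -
  have bound: "\<bar>a * y i + b * z i\<bar> \<le> \<bar>a\<bar> * \<bar>y i\<bar> + \<bar>b\<bar> * \<bar>z i\<bar>" for i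
    using abs_triangle_ineq[of "a * y i" "b * z i"] by (simp add: abs_mult)
  have ay: "summable (\<lambda>i. \<bar>a\<bar> * \<bar>y i\<bar>)" and bz: "summable (\<lambda>i. \<bar>b\<bar> * \<bar>z i\<bar>)"
    using summable_mult[OF y] summable_mult[OF z] by blast+
  show sum: "summable (\<lambda>i. \<bar>a * y i + b * z i\<bar>)"
    by (rule summable_comparison_test'[OF summable_add[OF ay bz]]) (simp add: bound)
  have "(\<Sum>i. \<bar>a * y i + b * z i\<bar>) \<le> (\<Sum>i. \<bar>a\<bar> * \<bar>y i\<bar> + \<bar>b\<bar> * \<bar>z i\<bar>)"
    by (rule suminf_le[OF bound sum summable_add[OF ay bz]])
  also have "\<dots> = \<bar>a\<bar> * (\<Sum>i. \<bar>y i\<bar>) + \<bar>b\<bar> * (\<Sum>i. \<bar>z i\<bar>)"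
    by (simp add: suminf_add[OF ay bz, symmetric] suminf_mult[OF y] suminf_mult[OF z])
  finally show "(\<Sum>i. \<bar>a * y i + b * z i\<bar>) \<le> \<bar>a\<bar> * (\<Sum>i. \<bar>y i\<bar>) + \<bar>b\<bar> * (\<Sum>i. \<bar>z i\<bar>)" .
qed

lemma mem_l1_le1: "x \<in> l1_le1 \<longleftrightarrow> summable (\<lambda>i. \<bar>x i\<bar>) \<and> (\<Sum>i. \<bar>x i\<bar>) \<le> 1"
  using summable_square_if_summable_abs by (auto simp: l1_le1_def l2_def)

lemma mem_l1_lt1: "x \<in> l1_lt1 \<longleftrightarrow> summable (\<lambda>i. \<bar>x i\<bar>) \<and> (\<Sum>i. \<bar>x i\<bar>) < 1"
  using summable_square_if_summable_abs by (auto simp: l1_lt1_def l2_def)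

lemma l1_lt1_subset_l1_le1: "l1_lt1 \<subseteq> l1_le1"
  by (auto simp: mem_l1_le1 mem_l1_lt1)

lemma seq_convex_l1_le1: "seq_convex l1_le1"
proof (unfold seq_convex_def, intro ballI allI impI)
  fix y z and t :: real assume y: "y \<in> l1_le1" and z: "z \<in> l1_le1" and t: "0 \<le> t \<and> t \<le> 1"
  have "(\<Sum>i. \<bar>(1 - t) * y i + t * z i\<bar>) \<le> (1 - t) * (\<Sum>i. \<bar>y i\<bar>) + t * (\<Sum>i. \<bar>z i\<bar>)"
    using y z t summable_abs_lincomb(2)[of y z "1 - t" t] by (simp add: mem_l1_le1)
  also have "\<dots> \<le> (1 - t) * 1 + t * 1"
    using y z t by (intro add_mono mult_left_mono) (auto simp: mem_l1_le1)
  finally show "(\<lambda>i. (1 - t) * y i + t * z i) \<in> l1_le1"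
    using y z summable_abs_lincomb(1) by (simp add: mem_l1_le1)
qed

lemma icr_l1_le1_subset: "icr l1_le1 \<subseteq> l1_lt1"
proof
  fix x assume x: "x \<in> icr l1_le1"
  have "(\<lambda>i. 0) \<in> l1_le1"
    by (simp add: mem_l1_le1)
  with x obtain z t where z: "z \<in> l1_le1" and t: "0 < t" "t < 1"
    and x_eq: "x = (\<lambda>i. (1 - t) * 0 + t * z i)"
    by (force simp: icr_def oseg_def)
  have "(\<Sum>i. \<bar>x i\<bar>) \<le> t * (\<Sum>i. \<bar>z i\<bar>)"
    using z t summable_abs_lincomb(2)[of "\<lambda>i. 0" z "1 - t" t] by (simp add: x_eq mem_l1_le1)
  also have "\<dots> \<le> t"
    using z t by (simp add: mem_l1_le1 mult_left_le)
  also have "\<dots> < 1"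
    using t by simp
  finally show "x \<in> l1_lt1"
    using z summable_abs_lincomb(1)[of "\<lambda>i. 0" z] by (simp add: x_eq mem_l1_lt1 mem_l1_le1)
qed

lemma l1_lt1_subset_icr: "l1_lt1 \<subseteq> icr l1_le1"
proof
  fix x assume x: "x \<in> l1_lt1"
  define a where "a = (\<Sum>i. \<bar>x i\<bar>)"
  have "0 \<le> a" "a < 1"
    using x by (auto simp: a_def mem_l1_lt1 intro: suminf_nonneg)
  \<comment> \<open>the prolongation \<open>z = x + s (x - y)\<close> has \<open>\<parallel>z\<parallel>\<^sub>1 \<le> (1 + s) a + s\<close>, which this \<open>s\<close> makes \<open>1\<close>\<close>
  define s where "s = (1 - a) / (1 + a)"
  have "0 < 1 + a"
    using \<open>0 \<le> a\<close> by simp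
  then have s: "0 < s" "(1 + s) * a + s = 1"
    using \<open>a < 1\<close> by (simp_all add: s_def divide_simps)
  have "\<exists>z\<in>l1_le1. x \<in> oseg y z" if y: "y \<in> l1_le1" for y
  proof
    define z where "z = (\<lambda>i. (1 + s) * x i - s * y i)"
    have "(\<Sum>i. \<bar>z i\<bar>) \<le> (1 + s) * a + s * (\<Sum>i. \<bar>y i\<bar>)"
      using x y s summable_abs_lincomb(2)[of x y "1 + s" "- s"]
      by (simp add: z_def a_def mem_l1_lt1 mem_l1_le1)
    also have "\<dots> \<le> (1 + s) * a + s"
      using y \<open>0 < s\<close> by (simp add: mem_l1_le1 mult_left_le)
    also have "\<dots> = 1"
      by (rule s(2))
    finally show "z \<in> l1_le1"
      using x y summable_abs_lincomb(1)[of x y "1 + s" "- s"] by (simp add: z_def mem_l1_lt1 mem_l1_le1)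
    define t where "t = 1 / (1 + s)"
    have t: "0 < t" "t < 1" "t * (1 + s) = 1"
      using s by (simp_all add: t_def)
    have "x = (\<lambda>i. (1 - t) * y i + t * z i)"
    proof
      fix i
      have "(1 - t) * y i + t * z i = (1 - t * (1 + s)) * y i + t * (1 + s) * x i"
        by (simp add: z_def algebra_simps)
      then show "x i = (1 - t) * y i + t * z i"
        using t by simp
    qed
    with t show "x \<in> oseg y z"
      unfolding oseg_def by blast
  qed
  with x show "x \<in> icr l1_le1"
    using l1_lt1_subset_l1_le1 by (auto simp: icr_def)
qed

lemma sgn_mult_le_abs:
  fixes a b :: real
  shows "sgn a * b \<le> \<bar>b\<bar>"
  by (auto simp: sgn_if)

definition sign_pairing :: "seq \<Rightarrow> seq \<Rightarrow> real" where
  "sign_pairing x y = (\<Sum>i. sgn (x i) * y i)"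

lemma summable_sign_pairing:
  fixes x y :: seq
  assumes "summable (\<lambda>i. \<bar>y i\<bar>)"
  shows "summable (\<lambda>i. sgn (x i) * y i)"
  by (rule summable_comparison_test'[where N = 0, OF assms]) (simp add: abs_mult abs_sgn_eq)

lemma sign_pairing_le_l1:
  fixes y :: seq
  assumes "summable (\<lambda>i. \<bar>y i\<bar>)"
  shows "sign_pairing x y \<le> (\<Sum>i. \<bar>y i\<bar>)"
  unfolding sign_pairing_def
  by (rule suminf_le[OF sgn_mult_le_abs summable_sign_pairing[OF assms] assms])

lemma sign_pairing_lincomb:
  fixes y z :: seq
  assumes y: "summable (\<lambda>i. \<bar>y i\<bar>)" and z: "summable (\<lambda>i. \<bar>z i\<bar>)"
  shows "sign_pairing x (\<lambda>i. a * y i + b * z i) = a * sign_pairing x y + b * sign_pairing x z"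
proof -
  note sy = summable_mult[OF summable_sign_pairing[OF y], of a]
  note sz = summable_mult[OF summable_sign_pairing[OF z], of b]
  have "sign_pairing x (\<lambda>i. a * y i + b * z i) = (\<Sum>i. a * (sgn (x i) * y i) + b * (sgn (x i) * z i))"
    by (simp add: sign_pairing_def algebra_simps)
  also have "\<dots> = a * sign_pairing x y + b * sign_pairing x z"
    by (simp add: suminf_add[OF sy sz, symmetric] sign_pairing_def
        suminf_mult[OF summable_sign_pairing[OF y]] suminf_mult[OF summable_sign_pairing[OF z]])
  finally show ?thesis .
qed

lemma sign_pairing_self: "sign_pairing x x = (\<Sum>i. \<bar>x i\<bar>)"
  by (simp add: sign_pairing_def abs_sgn mult.commute)

lemma sign_pairing_ge_l1_imp_nonneg:
  fixes x w :: seq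
  assumes w: "summable (\<lambda>i. \<bar>w i\<bar>)" and ge: "(\<Sum>i. \<bar>w i\<bar>) \<le> sign_pairing x w"
  shows "0 \<le> sgn (x j) * w j"
proof -
  define d where "d = (\<lambda>i. \<bar>w i\<bar> - sgn (x i) * w i)"
  have d_nonneg: "0 \<le> d i" for i
    using sgn_mult_le_abs[of "x i" "w i"] by (simp add: d_def)
  have d_sum: "summable d" "(\<Sum>i. d i) = (\<Sum>i. \<bar>w i\<bar>) - sign_pairing x w"
    unfolding d_def sign_pairing_def
    using summable_diff[OF w summable_sign_pairing[OF w]] suminf_diff[OF w summable_sign_pairing[OF w]]
    by simp_all
  then have "(\<Sum>i. d i) = 0"
    using ge suminf_nonneg[OF d_sum(1) d_nonneg] by linarith
  then have "d j = 0"
    using suminf_eq_zero_iff[OF d_sum(1) d_nonneg] by blast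
  then show ?thesis
    by (simp add: d_def)
qed

definition sign_face :: "seq \<Rightarrow> seq set" where
  "sign_face x = {y \<in> l1_le1. sign_pairing x y = 1}"

lemma is_face_sign_face: "is_face (sign_face x) l1_le1"
  unfolding sign_face_def
proof (rule is_face_level_set[OF seq_convex_l1_le1])
  fix y assume "y \<in> l1_le1"
  then show "sign_pairing x y \<le> 1"
    using sign_pairing_le_l1[of y x] by (simp add: mem_l1_le1)
next
  fix y z and t :: real assume "y \<in> l1_le1" "z \<in> l1_le1"
  then show "sign_pairing x (\<lambda>i. (1 - t) * y i + t * z i) = (1 - t) * sign_pairing x y + t * sign_pairing x z"
    by (intro sign_pairing_lincomb) (simp_all add: mem_l1_le1)
qed

lemma l2_diff:
  assumes x: "x \<in> l2" and y: "y \<in> l2"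
  shows "(\<lambda>i. x i - y i) \<in> l2"
proof -
  have bound: "norm ((x i - y i)\<^sup>2) \<le> 2 * (x i)\<^sup>2 + 2 * (y i)\<^sup>2" for i
  proof -
    have "(x i - y i)\<^sup>2 + (x i + y i)\<^sup>2 = 2 * (x i)\<^sup>2 + 2 * (y i)\<^sup>2"
      by (simp add: power2_eq_square algebra_simps)
    moreover have "norm ((x i - y i)\<^sup>2) = (x i - y i)\<^sup>2"
      by simp
    ultimately show ?thesis
      using zero_le_power2[of "x i + y i"] by linarith
  qed
  have "summable (\<lambda>i. 2 * (x i)\<^sup>2 + 2 * (y i)\<^sup>2)"
    using x y unfolding l2_def by (intro summable_add summable_mult) simp_all
  then show ?thesis
    unfolding l2_def mem_Collect_eq by (rule summable_comparison_test'[where N = 0]) (rule bound)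
qed

lemma abs_le_l2norm:
  assumes "x \<in> l2"
  shows "\<bar>x j\<bar> \<le> l2norm x"
proof -
  have "(x j)\<^sup>2 \<le> (\<Sum>i. (x i)\<^sup>2)"
    using sum_le_suminf[of "\<lambda>i. (x i)\<^sup>2" "{j}"] assms by (simp add: l2_def)
  then show ?thesis
    unfolding l2norm_def using real_sqrt_le_mono real_sqrt_abs by metis
qed

lemma not_fri_if_l1_norm_one:
  assumes x: "x \<in> l1_le1" and norm_one: "(\<Sum>i. \<bar>x i\<bar>) = 1"
  shows "x \<notin> fri l1_le1"
proof
  assume "x \<in> fri l1_le1"
  then have closure: "l1_le1 \<subseteq> l2closure (Fmin x l1_le1)"
    by (simp add: fri_def)
  have "x \<noteq> (\<lambda>i. 0)"
    using norm_one by auto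
  then obtain j where j: "x j \<noteq> 0"
    by blast
  have "x \<in> sign_face x"
    using x norm_one by (simp add: sign_face_def sign_pairing_self)
  then have Fmin_sub: "Fmin x l1_le1 \<subseteq> sign_face x"
    using is_face_sign_face unfolding Fmin_def by blast
  define p where "p = (\<lambda>i. if i = j then - sgn (x j) else (0::real))"
  have "(\<lambda>i. \<bar>p i\<bar>) = (\<lambda>i. if i = j then 1 else 0)"
    using j by (intro ext) (simp add: p_def abs_sgn_eq)
  then have "p \<in> l1_le1"
    using sums_single[of j "\<lambda>_. 1::real"] by (simp add: mem_l1_le1 sums_iff)
  with closure have "p \<in> l2closure (Fmin x l1_le1)"
    by blast
  then obtain w where "w \<in> Fmin x l1_le1" and dist: "l2norm (\<lambda>i. p i - w i) < 1"
    unfolding l2closure_def using zero_less_one by blast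
  with Fmin_sub have w: "w \<in> l1_le1" "sign_pairing x w = 1"
    by (auto simp: sign_face_def)
  then have "0 \<le> sgn (x j) * w j"
    by (intro sign_pairing_ge_l1_imp_nonneg) (simp_all add: mem_l1_le1)
  \<comment> \<open>\<open>p\<^sub>j\<close> and \<open>w\<^sub>j\<close> lie on opposite sides of \<open>0\<close>, and \<open>\<bar>p\<^sub>j\<bar> = 1\<close>\<close>
  then have "1 \<le> \<bar>p j - w j\<bar>"
    using j by (cases "0 < x j") (simp_all add: p_def)
  also have "\<dots> \<le> l2norm (\<lambda>i. p i - w i)"
    using \<open>p \<in> l1_le1\<close> w by (intro abs_le_l2norm l2_diff) (simp_all add: l1_le1_def)
  finally show False
    using dist by simp
qed

theorem mainTheorem19:
  shows "icr l1_le1 = l1_lt1 \<and> fri l1_le1 = l1_lt1"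
proof -
  have icr: "icr l1_le1 = l1_lt1"
    using icr_l1_le1_subset l1_lt1_subset_icr by blast
  have "l1_lt1 \<subseteq> fri l1_le1"
    using icr icr_subset_fri[of l1_le1] by (auto simp: l1_le1_def)
  moreover have "fri l1_le1 \<subseteq> l1_lt1"
  proof
    fix x assume "x \<in> fri l1_le1"
    moreover from this have "x \<in> l1_le1"
      by (simp add: fri_def)
    ultimately show "x \<in> l1_lt1"
      using not_fri_if_l1_norm_one by (force simp: mem_l1_le1 mem_l1_lt1)
  qed
  ultimately show ?thesis
    using icr by blast
qed

end
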